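(* Let $G$ be a finitely generated non-nilpotent group and let $N$ be a torsion-free nilpotent normal subgroup of finite index in $G$. Let $p>|G:N|$ be a prime and let $j\ge 1$. Then every subgroup $K$ of $G$ with $G=NK$ and $N\cap K=N^{p^j}$ (a dependent subgroup for $p$) is non-nilpotent.
   Context: For a positive integer $m$, $N^m$ denotes the subgroup of $N$ generated by all $m$-th powers of elements of $N$. For a prime $p>|G:N|$, the subgroups $K_j$ with $G=NK_j$ and $N\cap K_j=N^{p^j}$ (i.e. $K_j/N^{p^j}$ is a complement of $N/N^{p^j}$ in $G/N^{p^j}$) are called the dependent subgroups for $p$. *)

theory Defs
  imports "HOL-Algebra.Algebra"
begin

definition commutator_set :: "('a, 'b) monoid_scheme \<Rightarrow> 'a set \<Rightarrow> 'a set \<Rightarrow> 'a set" where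
  "commutator_set G A B =
     (\<Union>a\<in>A. \<Union>b\<in>B. {a \<otimes>\<^bsub>G\<^esub> b \<otimes>\<^bsub>G\<^esub> inv\<^bsub>G\<^esub> a \<otimes>\<^bsub>G\<^esub> inv\<^bsub>G\<^esub> b})"

fun lower_central :: "('a, 'b) monoid_scheme \<Rightarrow> nat \<Rightarrow> 'a set" where
  "lower_central G 0 = carrier G"
| "lower_central G (Suc n) = generate G (commutator_set G (lower_central G n) (carrier G))"

definition nilpotent_group :: "('a, 'b) monoid_scheme \<Rightarrow> bool" where
  "nilpotent_group G \<longleftrightarrow> (\<exists>c. lower_central G c = {\<one>\<^bsub>G\<^esub>})"

definition finitely_generated :: "('a, 'b) monoid_scheme \<Rightarrow> bool" where
  "finitely_generated G \<longleftrightarrow> (\<exists>S. finite S \<and> S \<subseteq> carrier G \<and> generate G S = carrier G)"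

definition torsion_free_set :: "('a, 'b) monoid_scheme \<Rightarrow> 'a set \<Rightarrow> bool" where
  "torsion_free_set G N \<longleftrightarrow> (\<forall>x\<in>N. \<forall>n::nat. n > 0 \<longrightarrow> x [^]\<^bsub>G\<^esub> n = \<one>\<^bsub>G\<^esub> \<longrightarrow> x = \<one>\<^bsub>G\<^esub>)"

definition power_subgroup :: "('a, 'b) monoid_scheme \<Rightarrow> 'a set \<Rightarrow> nat \<Rightarrow> 'a set" where
  "power_subgroup G N m = generate G {x [^]\<^bsub>G\<^esub> m | x. x \<in> N}"

end

theory Submission
  imports Defs
begin

text \<open>If \<open>K\<close> were nilpotent, \<open>G = NK\<close> would be nilpotent. Let \<open>Z\<^sub>i\<close> be the upper central
  series of \<open>N\<close> and \<open>q = p\<^sup>j\<close>, so that \<open>x\<^sup>q \<in> K\<close> for \<open>x \<in> N\<close>. Since \<open>N\<close> is torsion-free,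
  so is each factor \<open>Z\<^sub>i\<^sub>+\<^sub>1/Z\<^sub>i\<close>. For \<open>x \<in> Z\<^sub>i\<^sub>+\<^sub>1\<close> and \<open>k \<in> K\<close> one has
  \<open>[x, k]\<^sup>q \<equiv> [x\<^sup>q, k]\<close> modulo \<open>Z\<^sub>i\<close>, so the iterated commutators of \<open>x\<close> with elements of \<open>K\<close>
  shadow those of \<open>x\<^sup>q\<close> inside the nilpotent group \<open>K\<close>; torsion-freeness pulls their eventual
  triviality back to \<open>x\<close>. As \<open>N\<close> acts trivially on \<open>Z\<^sub>i\<^sub>+\<^sub>1/Z\<^sub>i\<close>, the whole of \<open>G = NK\<close> acts
  nilpotently on every \<open>Z\<^sub>i\<^sub>+\<^sub>1/Z\<^sub>i\<close> and, through \<open>K\<close>, on \<open>G/N\<close>; hence \<open>G\<close> is nilpotent.\<close>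

definition commutator :: "('a, 'b) monoid_scheme \<Rightarrow> 'a \<Rightarrow> 'a \<Rightarrow> 'a" where
  "commutator G x y = x \<otimes>\<^bsub>G\<^esub> y \<otimes>\<^bsub>G\<^esub> inv\<^bsub>G\<^esub> x \<otimes>\<^bsub>G\<^esub> inv\<^bsub>G\<^esub> y"

text \<open>The members of \<open>upper_central_rel G S B k\<close> are the elements of \<open>S\<close> whose \<open>k\<close>-fold
  commutators with elements of \<open>S\<close> all lie in \<open>B\<close>; for \<open>B = {\<one>}\<close> this is the upper central
  series of \<open>S\<close>.\<close>
fun upper_central_rel :: "('a, 'b) monoid_scheme \<Rightarrow> 'a set \<Rightarrow> 'a set \<Rightarrow> nat \<Rightarrow> 'a set" where
  "upper_central_rel G S B 0 = B"
| "upper_central_rel G S B (Suc k) =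
     {x \<in> S. \<forall>y\<in>S. commutator G x y \<in> upper_central_rel G S B k}"

lemma commutator_set_eq: "commutator_set G A B = (\<Union>x\<in>A. \<Union>y\<in>B. {commutator G x y})"
  by (simp add: commutator_set_def commutator_def)

lemma upper_central_rel_subset: "B \<subseteq> S \<Longrightarrow> upper_central_rel G S B k \<subseteq> S"
  by (cases k) auto

lemma upper_central_rel_trans:
  assumes "B \<subseteq> upper_central_rel G S B' e"
  shows "upper_central_rel G S B f \<subseteq> upper_central_rel G S B' (f + e)"
  by (induction f) (use assms in auto)

context group
begin

lemma m_inv_cancel_left [simp]: "x \<in> carrier G \<Longrightarrow> y \<in> carrier G \<Longrightarrow> x \<otimes> (inv x \<otimes> y) = y"
  by (simp add: m_assoc [symmetric])

lemma inv_m_cancel_left [simp]: "x \<in> carrier G \<Longrightarrow> y \<in> carrier G \<Longrightarrow> inv x \<otimes> (x \<otimes> y) = y"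
  by (simp add: m_assoc [symmetric])

lemma commutator_closed [simp]:
  "x \<in> carrier G \<Longrightarrow> y \<in> carrier G \<Longrightarrow> commutator G x y \<in> carrier G"
  by (simp add: commutator_def)

lemma commutator_one_left [simp]: "y \<in> carrier G \<Longrightarrow> commutator G \<one> y = \<one>"
  by (simp add: commutator_def m_assoc)

lemma inv_commutator:
  "x \<in> carrier G \<Longrightarrow> y \<in> carrier G \<Longrightarrow> inv (commutator G x y) = commutator G y x"
  by (simp add: commutator_def m_assoc inv_mult_group)

lemma commutator_mult_left:
  "x \<in> carrier G \<Longrightarrow> x' \<in> carrier G \<Longrightarrow> y \<in> carrier G \<Longrightarrow>
   commutator G (x \<otimes> x') y = x \<otimes> commutator G x' y \<otimes> inv x \<otimes> commutator G x y"
  by (simp add: commutator_def m_assoc inv_mult_group)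

lemma commutator_inv_left:
  "x \<in> carrier G \<Longrightarrow> y \<in> carrier G \<Longrightarrow>
   commutator G (inv x) y = inv x \<otimes> inv (commutator G x y) \<otimes> x"
  by (simp add: commutator_def m_assoc inv_mult_group)

lemma commutator_conj_left:
  "g \<in> carrier G \<Longrightarrow> x \<in> carrier G \<Longrightarrow> y \<in> carrier G \<Longrightarrow>
   commutator G (g \<otimes> x \<otimes> inv g) y = g \<otimes> commutator G x (inv g \<otimes> y \<otimes> g) \<otimes> inv g"
  by (simp add: commutator_def m_assoc inv_mult_group)

lemma commutator_mult_right:
  "x \<in> carrier G \<Longrightarrow> y \<in> carrier G \<Longrightarrow> y' \<in> carrier G \<Longrightarrow>
   commutator G x (y \<otimes> y') = commutator G x y \<otimes> (y \<otimes> commutator G x y' \<otimes> inv y)"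
  by (simp add: commutator_def m_assoc inv_mult_group)

lemma conj_eq_commutator_mult:
  "x \<in> carrier G \<Longrightarrow> y \<in> carrier G \<Longrightarrow> x \<otimes> y \<otimes> inv x = commutator G x y \<otimes> y"
  by (simp add: commutator_def m_assoc inv_mult_group)

lemma commutator_subgroup_eq:
  assumes "subgroup H G" "x \<in> H" "y \<in> H"
  shows "commutator (G\<lparr>carrier := H\<rparr>) x y = commutator G x y"
  using assms by (simp add: commutator_def)

lemma subgroup_nat_pow_closed: "subgroup H G \<Longrightarrow> x \<in> H \<Longrightarrow> x [^] (n::nat) \<in> H"
  by (induction n) (auto simp: subgroup.one_closed subgroup.m_closed)

lemma mult_inv_mem_trans:
  assumes H: "subgroup H G" and abc: "a \<in> carrier G" "b \<in> carrier G" "c \<in> carrier G"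
    and "a \<otimes> inv b \<in> H" "a \<otimes> inv c \<in> H"
  shows "b \<otimes> inv c \<in> H"
proof -
  have "b \<otimes> inv c = inv (a \<otimes> inv b) \<otimes> (a \<otimes> inv c)"
    using abc by (simp add: m_assoc inv_mult_group)
  then show ?thesis using assms subgroup.m_closed[OF H] subgroup.m_inv_closed[OF H] by metis
qed

lemma mult_inv_mem_imp_mem:
  assumes H: "subgroup H G" and "a \<in> H" "a \<otimes> inv b \<in> H" and b: "b \<in> carrier G"
  shows "b \<in> H"
  using mult_inv_mem_trans[OF H _ b one_closed] assms subgroup.subset[OF H] by auto

lemma commutator_in_normal_left:
  assumes A: "A \<lhd> G" and x: "x \<in> A" and y: "y \<in> carrier G"
  shows "commutator G x y \<in> A"
proof -
  have As: "subgroup A G" using A normal_imp_subgroup by blast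
  have "x \<in> carrier G" using x As subgroup.subset by blast
  then have "commutator G x y = x \<otimes> (y \<otimes> inv x \<otimes> inv y)"
    by (simp add: commutator_def m_assoc y)
  moreover have "y \<otimes> inv x \<otimes> inv y \<in> A"
    using A normal_inv_iff y x subgroup.m_inv_closed[OF As] by blast
  ultimately show ?thesis using x subgroup.m_closed[OF As] by simp
qed

lemma commutator_in_normal_right:
  assumes A: "A \<lhd> G" and x: "x \<in> carrier G" and y: "y \<in> A"
  shows "commutator G x y \<in> A"
proof -
  have As: "subgroup A G" using A normal_imp_subgroup by blast
  have "y \<in> carrier G" using y As subgroup.subset by blast
  then have "commutator G x y = inv (commutator G y x)" using x by (simp add: inv_commutator)
  then show ?thesis
    using commutator_in_normal_left[OF A y x] subgroup.m_inv_closed[OF As] by simp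
qed

lemma commutator_mult_right_mem:
  assumes A: "A \<lhd> G" and H: "subgroup H G" "A \<subseteq> H"
    and xnk: "x \<in> carrier G" "n \<in> carrier G" "k \<in> carrier G"
    and "commutator G x n \<in> A" "commutator G n (commutator G x k) \<in> A"
    and "commutator G x k \<in> H"
  shows "commutator G x (n \<otimes> k) \<in> H"
proof -
  have "commutator G x (n \<otimes> k) =
        commutator G x n \<otimes> (commutator G n (commutator G x k) \<otimes> commutator G x k)"
    using xnk by (simp add: commutator_mult_right conj_eq_commutator_mult)
  then show ?thesis using assms subgroup.m_closed[OF H(1)] by (metis subsetD)
qed

lemma commutator_mult_left_mod:
  assumes Z: "Z \<lhd> G" and z: "z \<in> Z" and u: "u \<in> carrier G" and k: "k \<in> carrier G"
  shows "commutator G (z \<otimes> u) k \<otimes> inv (commutator G u k) \<in> Z"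
proof -
  have Zs: "subgroup Z G" using Z normal_imp_subgroup by blast
  have zC: "z \<in> carrier G" using z Zs subgroup.subset by blast
  define c where "c = commutator G u k"
  have cC: "c \<in> carrier G" using u k by (simp add: c_def)
  have "commutator G (z \<otimes> u) k \<otimes> inv c = z \<otimes> (c \<otimes> (inv z \<otimes> commutator G z k) \<otimes> inv c)"
    using zC u k cC by (simp add: commutator_mult_left c_def m_assoc)
  moreover have "inv z \<otimes> commutator G z k \<in> Z"
    using z commutator_in_normal_left[OF Z z k] subgroup.m_closed[OF Zs] subgroup.m_inv_closed[OF Zs]
    by blast
  then have "c \<otimes> (inv z \<otimes> commutator G z k) \<otimes> inv c \<in> Z" using Z normal_inv_iff cC by blast
  ultimately show ?thesis using z subgroup.m_closed[OF Zs] by (simp add: c_def)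
qed

lemma commutator_nat_pow_left_mod:
  assumes Z: "Z \<lhd> G" and x: "x \<in> carrier G" and y: "y \<in> carrier G"
    and h: "\<And>m::nat. commutator G x (commutator G (x [^] m) y) \<in> Z"
  shows "commutator G (x [^] (m::nat)) y \<otimes> inv (commutator G x y [^] m) \<in> Z"
proof (induction m)
  case 0
  then show ?case using Z normal_imp_subgroup subgroup.one_closed by (fastforce simp: y)
next
  case (Suc m)
  have Zs: "subgroup Z G" using Z normal_imp_subgroup by blast
  define a where "a = commutator G (x [^] m) y"
  define c where "c = commutator G x y"
  define b where "b = c [^] m"
  define z where "z = commutator G x a"
  have aC: "a \<in> carrier G" and cC: "c \<in> carrier G" and bC: "b \<in> carrier G" and zC: "z \<in> carrier G"
    using x y by (auto simp: a_def b_def c_def z_def)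
  have "commutator G (x [^] Suc m) y = commutator G (x \<otimes> x [^] m) y"
    using x nat_pow_Suc2[OF x, of m] by (simp del: nat_pow_Suc)
  also have "\<dots> = x \<otimes> a \<otimes> inv x \<otimes> c" using x y by (simp add: commutator_mult_left a_def c_def)
  also have "x \<otimes> a \<otimes> inv x = z \<otimes> a" using x aC by (simp add: conj_eq_commutator_mult z_def)
  finally have "commutator G (x [^] Suc m) y \<otimes> inv (commutator G x y [^] Suc m) = z \<otimes> (a \<otimes> inv b)"
    using aC bC cC zC by (simp add: b_def c_def m_assoc inv_mult_group)
  moreover have "z \<in> Z" using h by (simp add: z_def a_def)
  moreover have "a \<otimes> inv b \<in> Z" using Suc by (simp add: a_def b_def c_def)
  ultimately show ?case using subgroup.m_closed[OF Zs] by simp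
qed

lemma upper_central_rel_step_subgroup:
  assumes S: "subgroup S G" and U: "U \<lhd> G"
  shows "subgroup {x \<in> S. \<forall>y\<in>S. commutator G x y \<in> U} G"
proof -
  have Us: "subgroup U G" using U normal_imp_subgroup by blast
  have SC: "S \<subseteq> carrier G" using S subgroup.subset by blast
  have conj: "\<And>g u. g \<in> carrier G \<Longrightarrow> u \<in> U \<Longrightarrow> g \<otimes> u \<otimes> inv g \<in> U"
    using U normal_inv_iff by blast
  show ?thesis
  proof (rule subgroupI)
    fix a assume a: "a \<in> {x \<in> S. \<forall>y\<in>S. commutator G x y \<in> U}"
    then have aC: "a \<in> carrier G" using SC by blast
    have "commutator G (inv a) y \<in> U" if "y \<in> S" for y
      using that a aC SC conj[of "inv a" "inv (commutator G a y)"] subgroup.m_inv_closed[OF Us]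
      by (auto simp: commutator_inv_left)
    then show "inv a \<in> {x \<in> S. \<forall>y\<in>S. commutator G x y \<in> U}"
      using a subgroup.m_inv_closed[OF S] by blast
  next
    fix a b assume a: "a \<in> {x \<in> S. \<forall>y\<in>S. commutator G x y \<in> U}"
      and b: "b \<in> {x \<in> S. \<forall>y\<in>S. commutator G x y \<in> U}"
    then have abC: "a \<in> carrier G" "b \<in> carrier G" using SC by blast+
    have "commutator G (a \<otimes> b) y \<in> U" if "y \<in> S" for y
      using that a b abC SC conj[of a "commutator G b y"] subgroup.m_closed[OF Us]
      by (auto simp: commutator_mult_left)
    then show "a \<otimes> b \<in> {x \<in> S. \<forall>y\<in>S. commutator G x y \<in> U}"
      using a b subgroup.m_closed[OF S] by blast
  qed (use SC subgroup.one_closed[OF S] subgroup.one_closed[OF Us] in \<open>auto intro!: exI[of _ \<one>]\<close>)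
qed

lemma upper_central_rel_step_normal:
  assumes S: "S \<lhd> G" and U: "U \<lhd> G"
  shows "{x \<in> S. \<forall>y\<in>S. commutator G x y \<in> U} \<lhd> G"
  unfolding normal_inv_iff
proof (intro conjI ballI upper_central_rel_step_subgroup U)
  show "subgroup S G" using S normal_imp_subgroup by blast
  then have SC: "S \<subseteq> carrier G" using subgroup.subset by blast
  have conjS: "\<And>g s. g \<in> carrier G \<Longrightarrow> s \<in> S \<Longrightarrow> g \<otimes> s \<otimes> inv g \<in> S"
    using S normal_inv_iff by blast
  fix g x assume g: "g \<in> carrier G" and x: "x \<in> {x \<in> S. \<forall>y\<in>S. commutator G x y \<in> U}"
  have "commutator G (g \<otimes> x \<otimes> inv g) y \<in> U" if y: "y \<in> S" for y
  proof -
    have "inv g \<otimes> y \<otimes> g \<in> S" using conjS[of "inv g" y] g y by simp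
    then have "g \<otimes> commutator G x (inv g \<otimes> y \<otimes> g) \<otimes> inv g \<in> U"
      using U normal_inv_iff g x by blast
    then show ?thesis using g x y SC by (simp add: commutator_conj_left subset_iff)
  qed
  then show "g \<otimes> x \<otimes> inv g \<in> {x \<in> S. \<forall>y\<in>S. commutator G x y \<in> U}"
    using conjS g x by blast
qed

lemma upper_central_rel_normal:
  "S \<lhd> G \<Longrightarrow> B \<lhd> G \<Longrightarrow> upper_central_rel G S B k \<lhd> G"
  by (induction k) (simp_all add: upper_central_rel_step_normal)

lemma upper_central_rel_subgroup:
  "S \<lhd> G \<Longrightarrow> B \<lhd> G \<Longrightarrow> subgroup (upper_central_rel G S B k) G"
  using upper_central_rel_normal normal_imp_subgroup by blast

lemma upper_central_rel_base:
  assumes B: "B \<lhd> G" "B \<subseteq> S" and S: "S \<subseteq> carrier G"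
  shows "B \<subseteq> upper_central_rel G S B k"
proof (induction k)
  case (Suc k)
  have "commutator G x y \<in> B" if "x \<in> B" "y \<in> S" for x y
    using that S commutator_in_normal_left[OF B(1)] by blast
  then show ?case unfolding upper_central_rel.simps using Suc B(2) by blast
qed simp

lemma lower_central_subset_upper_central_rel:
  assumes B: "B \<lhd> G" and G: "carrier G \<subseteq> upper_central_rel G (carrier G) B (m + d)"
  shows "lower_central G m \<subseteq> upper_central_rel G (carrier G) B d"
  using G
proof (induction m arbitrary: d)
  case 0
  then show ?case by simp
next
  case (Suc m)
  have "lower_central G m \<subseteq> upper_central_rel G (carrier G) B (Suc d)"
    using Suc.IH[of "Suc d"] Suc.prems by (simp only: add_Suc_right add_Suc)
  then have "commutator_set G (lower_central G m) (carrier G) \<subseteq> upper_central_rel G (carrier G) B d"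
    by (auto simp: commutator_set_eq)
  then show ?case
    using generate_subgroup_incl upper_central_rel_subgroup[OF normal_self B] by simp
qed

lemma commutator_set_subgroup_eq:
  assumes S: "subgroup S G" and A: "A \<subseteq> S"
  shows "commutator_set (G\<lparr>carrier := S\<rparr>) A S = (\<Union>x\<in>A. \<Union>y\<in>S. {commutator G x y})"
  unfolding commutator_set_eq by (intro SUP_cong refl) (use A commutator_subgroup_eq[OF S] in auto)

lemma lower_central_subgroup_subset:
  assumes S: "subgroup S G"
  shows "lower_central (G\<lparr>carrier := S\<rparr>) k \<subseteq> S"
proof (induction k)
  case 0
  then show ?case by simp
next
  case (Suc k)
  have grp: "group (G\<lparr>carrier := S\<rparr>)" using S subgroup.subgroup_is_group is_group by blast
  have "commutator_set (G\<lparr>carrier := S\<rparr>) (lower_central (G\<lparr>carrier := S\<rparr>) k) S \<subseteq> S"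
    using commutator_set_subgroup_eq[OF S Suc] Suc subgroup.m_closed[OF S] subgroup.m_inv_closed[OF S]
    unfolding commutator_def by auto
  then show ?case using group.generate_in_carrier[OF grp] by auto
qed

lemma lower_central_subgroup_subset_upper_central_rel:
  assumes S: "subgroup S G"
    and "lower_central (G\<lparr>carrier := S\<rparr>) (m + d) = {\<one>}"
  shows "lower_central (G\<lparr>carrier := S\<rparr>) m \<subseteq> upper_central_rel G S {\<one>} d"
  using assms(2)
proof (induction d arbitrary: m)
  case 0
  then show ?case by simp
next
  case (Suc d)
  have IH: "lower_central (G\<lparr>carrier := S\<rparr>) (Suc m) \<subseteq> upper_central_rel G S {\<one>} d"
    using Suc.IH[of "Suc m"] Suc.prems by (simp only: add_Suc_right add_Suc)
  have "commutator G x y \<in> upper_central_rel G S {\<one>} d"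
    if x: "x \<in> lower_central (G\<lparr>carrier := S\<rparr>) m" and y: "y \<in> S" for x y
  proof -
    have "commutator G x y \<in> commutator_set (G\<lparr>carrier := S\<rparr>) (lower_central (G\<lparr>carrier := S\<rparr>) m) S"
      using commutator_set_subgroup_eq[OF S lower_central_subgroup_subset[OF S]] x y by blast
    then have "commutator G x y \<in> lower_central (G\<lparr>carrier := S\<rparr>) (Suc m)"
      by (simp add: generate.incl)
    then show ?thesis using IH by blast
  qed
  then show ?case using lower_central_subgroup_subset[OF S] by auto
qed

lemma nilpotent_subgroup_subset_upper_central_rel:
  assumes S: "subgroup S G" and "nilpotent_group (G\<lparr>carrier := S\<rparr>)"
  obtains c where "S \<subseteq> upper_central_rel G S {\<one>} c"
proof -
  obtain c where "lower_central (G\<lparr>carrier := S\<rparr>) (0 + c) = {\<one>}"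
    using assms(2) by (auto simp: nilpotent_group_def)
  then show ?thesis using lower_central_subgroup_subset_upper_central_rel[OF S, of 0 c] that by simp
qed

lemma nilpotent_groupI_upper_central_rel:
  assumes "carrier G \<subseteq> upper_central_rel G (carrier G) {\<one>} c"
  shows "nilpotent_group G"
proof -
  have "lower_central G c \<subseteq> {\<one>}"
    using lower_central_subset_upper_central_rel[OF one_is_normal, of c 0] assms by simp
  moreover have "\<one> \<in> lower_central G c"
    by (cases c) (auto intro: generate.one)
  ultimately show ?thesis unfolding nilpotent_group_def by blast
qed

end

locale power_supplement = group G for G (structure) +
  fixes N K :: "'a set" and q :: nat
  assumes normal_N: "N \<lhd> G"
    and torsion_free_N: "torsion_free_set G N"
    and subgroup_K: "subgroup K G"
    and N_mult_K: "N <#> K = carrier G"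
    and q_pos: "q > 0"
    and nat_pow_in_K: "\<And>x. x \<in> N \<Longrightarrow> x [^] q \<in> K"
begin

abbreviation Z :: "nat \<Rightarrow> 'a set" where
  "Z i \<equiv> upper_central_rel G N {\<one>} i"

lemma subgroup_N: "subgroup N G"
  using normal_N normal_imp_subgroup by blast

lemma N_subset: "N \<subseteq> carrier G"
  using subgroup_N subgroup.subset by blast

lemma K_subset: "K \<subseteq> carrier G"
  using subgroup_K subgroup.subset by blast

lemma N_mult_K_decomp:
  assumes "g \<in> carrier G"
  obtains n k where "n \<in> N" "k \<in> K" "g = n \<otimes> k"
  using assms N_mult_K unfolding set_mult_def by blast

lemma Z_normal: "Z i \<lhd> G"
  using upper_central_rel_normal[OF normal_N one_is_normal] .

lemma Z_subgroup: "subgroup (Z i) G"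
  using Z_normal normal_imp_subgroup by blast

lemma Z_subset_N: "Z i \<subseteq> N"
  by (rule upper_central_rel_subset) (simp add: subgroup.one_closed[OF subgroup_N])

lemma Z_subset: "Z i \<subseteq> carrier G"
  using Z_subset_N N_subset by blast

lemma commutator_Z_Suc_left: "x \<in> Z (Suc i) \<Longrightarrow> y \<in> N \<Longrightarrow> commutator G x y \<in> Z i"
  by simp

lemma commutator_Z_Suc_right:
  assumes x: "x \<in> Z (Suc i)" and y: "y \<in> N"
  shows "commutator G y x \<in> Z i"
proof -
  have "x \<in> carrier G" "y \<in> carrier G" using x y Z_subset N_subset by blast+
  then have "commutator G y x = inv (commutator G x y)" by (simp add: inv_commutator)
  then show ?thesis using commutator_Z_Suc_left[OF x y] subgroup.m_inv_closed[OF Z_subgroup] by simp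
qed

lemma Z_Suc_nat_pow_root:
  "x \<in> Z (Suc i) \<Longrightarrow> x [^] q \<in> Z i \<Longrightarrow> x \<in> Z i"
proof (induction i arbitrary: x)
  case 0
  then have "x \<in> N" "x [^] q = \<one>" by auto
  then show ?case using torsion_free_N q_pos unfolding torsion_free_set_def by auto
next
  case (Suc i)
  have xN: "x \<in> N" and xC: "x \<in> carrier G" using Suc.prems(1) Z_subset_N N_subset by blast+
  have "commutator G x y \<in> Z i" if y: "y \<in> N" for y
  proof -
    have yC: "y \<in> carrier G" using y N_subset by blast
    have w: "commutator G x y \<in> Z (Suc i)" using commutator_Z_Suc_left[OF Suc.prems(1) y] .
    have "commutator G x (commutator G (x [^] m) y) \<in> Z i" for m :: nat
      using commutator_Z_Suc_right[OF commutator_Z_Suc_left[OF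
          subgroup_nat_pow_closed[OF Z_subgroup Suc.prems(1)] y] xN] .
    then have "commutator G (x [^] q) y \<otimes> inv (commutator G x y [^] q) \<in> Z i"
      using commutator_nat_pow_left_mod[OF Z_normal xC yC] by blast
    then have "commutator G x y [^] q \<in> Z i"
      using mult_inv_mem_imp_mem[OF Z_subgroup commutator_Z_Suc_left[OF Suc.prems(2) y]] xC yC
      by simp
    then show ?thesis using Suc.IH[OF w] by blast
  qed
  then show ?case using xN by simp
qed

lemma commutator_nat_pow_mod_Z:
  assumes x: "x \<in> Z (Suc i)" and u: "u \<in> carrier G" and k: "k \<in> carrier G"
    and xu: "x [^] q \<otimes> inv u \<in> Z i"
  shows "commutator G x k [^] q \<otimes> inv (commutator G u k) \<in> Z i"
proof -
  have xN: "x \<in> N" and xC: "x \<in> carrier G" using x Z_subset_N N_subset by blast+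
  have "commutator G x (commutator G (x [^] m) k) \<in> Z i" for m :: nat
    using commutator_Z_Suc_right[OF commutator_in_normal_left[OF
        Z_normal subgroup_nat_pow_closed[OF Z_subgroup x] k] xN] .
  then have "commutator G (x [^] q) k \<otimes> inv (commutator G x k [^] q) \<in> Z i"
    using commutator_nat_pow_left_mod[OF Z_normal xC k] by blast
  moreover have "commutator G (x [^] q) k \<otimes> inv (commutator G u k) \<in> Z i"
    using commutator_mult_left_mod[OF Z_normal xu u k] xC u by (simp add: m_assoc)
  ultimately show ?thesis
    by (rule mult_inv_mem_trans[OF Z_subgroup, rotated 3]) (use xC u k in simp_all)
qed

text \<open>The induction runs along the upper central series of \<open>K\<close>: \<open>x\<^sup>q\<close> is congruent modulo
  \<open>Z i\<close> to an element \<open>u\<close> of its \<open>d\<close>-th term, and commutation with \<open>k \<in> K\<close> preserves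
  this congruence while lowering \<open>d\<close>; at \<open>d = 0\<close> torsion-freeness finishes.\<close>
lemma Z_Suc_upper_central_rel_of_congruent_power:
  assumes "x \<in> Z (Suc i)" "u \<in> upper_central_rel G K {\<one>} d" "x [^] q \<otimes> inv u \<in> Z i"
  shows "x \<in> upper_central_rel G (carrier G) (Z i) d"
  using assms
proof (induction d arbitrary: x u)
  case 0
  have "x \<in> carrier G" using 0(1) Z_subset by blast
  then have "x [^] q \<in> Z i" using 0(2,3) by simp
  then show ?case using Z_Suc_nat_pow_root[OF 0(1)] by simp
next
  case (Suc d)
  have xC: "x \<in> carrier G" using Suc.prems(1) Z_subset by blast
  have uC: "u \<in> carrier G" using Suc.prems(2) K_subset by auto
  have "commutator G x g \<in> upper_central_rel G (carrier G) (Z i) d" if g: "g \<in> carrier G" for g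
  proof -
    obtain n k where n: "n \<in> N" and k: "k \<in> K" and gnk: "g = n \<otimes> k"
      using N_mult_K_decomp[OF g] .
    have nC: "n \<in> carrier G" and kC: "k \<in> carrier G" using n k N_subset K_subset by blast+
    have y: "commutator G x k \<in> Z (Suc i)"
      using commutator_in_normal_left[OF Z_normal Suc.prems(1) kC] .
    have "commutator G u k \<in> upper_central_rel G K {\<one>} d" using Suc.prems(2) k by simp
    then have "commutator G x k \<in> upper_central_rel G (carrier G) (Z i) d"
      using Suc.IH[OF y] commutator_nat_pow_mod_Z[OF Suc.prems(1) uC kC Suc.prems(3)] by blast
    then show ?thesis
      using commutator_mult_right_mem[OF Z_normal upper_central_rel_subgroup[OF normal_self Z_normal]
          upper_central_rel_base[OF Z_normal Z_subset subset_refl] xC nC kC]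
        commutator_Z_Suc_left[OF Suc.prems(1) n] commutator_Z_Suc_right[OF y n] gnk
      by simp
  qed
  then show ?case using xC by simp
qed

lemma Z_Suc_subset_upper_central_rel:
  assumes K: "K \<subseteq> upper_central_rel G K {\<one>} c"
  shows "Z (Suc i) \<subseteq> upper_central_rel G (carrier G) (Z i) c"
proof
  fix x assume x: "x \<in> Z (Suc i)"
  then have xC: "x \<in> carrier G" using Z_subset by blast
  have "x [^] q \<in> upper_central_rel G K {\<one>} c" using x K nat_pow_in_K Z_subset_N by blast
  moreover have "x [^] q \<otimes> inv (x [^] q) \<in> Z i" using xC subgroup.one_closed[OF Z_subgroup] by simp
  ultimately show "x \<in> upper_central_rel G (carrier G) (Z i) c"
    using Z_Suc_upper_central_rel_of_congruent_power[OF x] by blast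
qed

lemma Z_subset_upper_central:
  assumes K: "K \<subseteq> upper_central_rel G K {\<one>} c"
  shows "\<exists>e. Z i \<subseteq> upper_central_rel G (carrier G) {\<one>} e"
proof (induction i)
  case 0
  show ?case by (intro exI[of _ 0]) simp
next
  case (Suc i)
  then obtain e where "Z i \<subseteq> upper_central_rel G (carrier G) {\<one>} e" by blast
  then have "upper_central_rel G (carrier G) (Z i) c \<subseteq> upper_central_rel G (carrier G) {\<one>} (c + e)"
    by (rule upper_central_rel_trans)
  then show ?case using Z_Suc_subset_upper_central_rel[OF K] by blast
qed

lemma upper_central_K_subset_upper_central_rel_N:
  "upper_central_rel G K {\<one>} d \<subseteq> upper_central_rel G (carrier G) N d"
proof (induction d)
  case 0
  show ?case using subgroup.one_closed[OF subgroup_N] by simp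
next
  case (Suc d)
  have "commutator G x g \<in> upper_central_rel G (carrier G) N d"
    if x: "x \<in> upper_central_rel G K {\<one>} (Suc d)" and g: "g \<in> carrier G" for x g
  proof -
    obtain n k where n: "n \<in> N" and k: "k \<in> K" and gnk: "g = n \<otimes> k"
      using N_mult_K_decomp[OF g] .
    have xC: "x \<in> carrier G" using x K_subset by auto
    have nC: "n \<in> carrier G" and kC: "k \<in> carrier G" using n k N_subset K_subset by blast+
    have "commutator G x k \<in> upper_central_rel G (carrier G) N d" using x k Suc.IH by auto
    then show ?thesis
      using commutator_mult_right_mem[OF normal_N upper_central_rel_subgroup[OF normal_self normal_N]
          upper_central_rel_base[OF normal_N N_subset subset_refl] xC nC kC]
        commutator_in_normal_right[OF normal_N xC n] commutator_in_normal_left[OF normal_N n] gnk xC kC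
      by simp
  qed
  then show ?case using K_subset by auto
qed

lemma nilpotent_group_if_nilpotent_supplement:
  assumes "nilpotent_group (G\<lparr>carrier := N\<rparr>)" and "nilpotent_group (G\<lparr>carrier := K\<rparr>)"
  shows "nilpotent_group G"
proof -
  obtain c where c: "K \<subseteq> upper_central_rel G K {\<one>} c"
    using nilpotent_subgroup_subset_upper_central_rel[OF subgroup_K assms(2)] .
  obtain c' where "N \<subseteq> Z c'"
    using nilpotent_subgroup_subset_upper_central_rel[OF subgroup_N assms(1)] .
  then obtain e where e: "N \<subseteq> upper_central_rel G (carrier G) {\<one>} e"
    using Z_subset_upper_central[OF c] by blast
  have "carrier G \<subseteq> upper_central_rel G (carrier G) N c"
  proof
    fix g assume "g \<in> carrier G"
    then obtain n k where "n \<in> N" "k \<in> K" "g = n \<otimes> k" by (rule N_mult_K_decomp)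
    then show "g \<in> upper_central_rel G (carrier G) N c"
      using upper_central_rel_base[OF normal_N N_subset subset_refl] c
        upper_central_K_subset_upper_central_rel_N
        subgroup.m_closed[OF upper_central_rel_subgroup[OF normal_self normal_N]]
      by blast
  qed
  also have "\<dots> \<subseteq> upper_central_rel G (carrier G) {\<one>} (c + e)"
    using upper_central_rel_trans[OF e] .
  finally show ?thesis by (rule nilpotent_groupI_upper_central_rel)
qed

end

theorem mainTheorem9:
  fixes G (structure) and N K :: "'a set" and p j :: nat
  assumes "group G"
    and "finitely_generated G"
    and "\<not> nilpotent_group G"
    and "N \<lhd> G"
    and "torsion_free_set G N"
    and "nilpotent_group (G\<lparr>carrier := N\<rparr>)"
    and "finite (rcosets N)"
    and "Factorial_Ring.prime p"
    and "p > card (rcosets N)"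
    and "j \<ge> 1"
    and "subgroup K G"
    and "N <#> K = carrier G"
    and "N \<inter> K = power_subgroup G N (p ^ j)"
  shows "\<not> nilpotent_group (G\<lparr>carrier := K\<rparr>)"
proof
  assume nilpotent_K: "nilpotent_group (G\<lparr>carrier := K\<rparr>)"
  have "x [^] (p ^ j) \<in> K" if "x \<in> N" for x
    using that assms(13) unfolding power_subgroup_def by (blast intro: generate.incl)
  moreover have "p ^ j > 0" using assms(8) prime_gt_0_nat by simp
  ultimately interpret power_supplement G N K "p ^ j"
    using assms by (intro power_supplement.intro power_supplement_axioms.intro) auto
  show False
    using nilpotent_group_if_nilpotent_supplement[OF assms(6) nilpotent_K] assms(3) by blast
qed

end
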